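(* Let $V$ be a finite nonempty set and $f:\{0,1\}^V\to\{0,1\}^V$ be non-expansive. Every subnetwork of $f$ has a unique fixed point if and only if $f$ has no circular subnetwork (i.e., no subnetwork that is positive-circular or negative-circular).
   Context: $d$ is the Hamming distance on $\{0,1\}^V$; $f$ is non-expansive if $d(f(x),f(y))\le d(x,y)$ for all $x,y$. For nonempty $I\subseteq V$ and $z\in\{0,1\}^{V\setminus I}$, the subnetwork of $f$ induced by $z$ is $h:\{0,1\}^I\to\{0,1\}^I$ with $h(x|_I)=f(x)|_I$ for all $x$ whose restriction to $V\setminus I$ is $z$ ($f$ is a subnetwork of itself). For a network $g$ on $W$ and $x^{j\alpha}$ the point equal to $x$ except its $j$-component is $\alpha$, the global interaction graph $G(g)$ is the signed digraph on $W$ with a positive (resp. negative) arc from $j$ to $i$ iff $g_i(x^{j1})-g_i(x^{j0})=1$ (resp. $=-1$) for at least one $x$. A cycle is a subgraph with at most one arc between any ordered pair of vertices whose underlying unsigned digraph is a directed cycle; positive (negative) if it has an even (odd) number of negative arcs. $g$ is positive-circular (negative-circular) if $G(g)$ itself is a positive (negative) cycle through all vertices of $W$. *)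

theory Defs
  imports Main
begin

text \<open>The vertex set V is the (finite, nonempty) universe of a type 'v::finite.
  Configurations in {0,1}^V are functions 'v => bool (True = 1).
  A configuration on a subset I is represented as a function 'v => bool
  that is False outside I.\<close>

definition hamming :: "('v \<Rightarrow> bool) \<Rightarrow> ('v \<Rightarrow> bool) \<Rightarrow> nat" where
  "hamming x y = card {v. x v \<noteq> y v}"

definition non_expansive :: "(('v::finite \<Rightarrow> bool) \<Rightarrow> ('v \<Rightarrow> bool)) \<Rightarrow> bool" where
  "non_expansive f \<longleftrightarrow> (\<forall>x y. hamming (f x) (f y) \<le> hamming x y)"

definition confs :: "'v set \<Rightarrow> ('v \<Rightarrow> bool) set" where
  "confs I = {y. \<forall>v. v \<notin> I \<longrightarrow> \<not> y v}"

text \<open>Subnetwork of f on I induced by z (only the values of z outside I matter):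
  h(x|_I) = f(x)|_I where x agrees with y on I and with z outside I.\<close>
definition subnet :: "(('v \<Rightarrow> bool) \<Rightarrow> ('v \<Rightarrow> bool)) \<Rightarrow> 'v set \<Rightarrow> ('v \<Rightarrow> bool)
    \<Rightarrow> ('v \<Rightarrow> bool) \<Rightarrow> ('v \<Rightarrow> bool)" where
  "subnet f I z y = (\<lambda>v. if v \<in> I then f (\<lambda>u. if u \<in> I then y u else z u) v else False)"

definition pos_arc :: "(('v \<Rightarrow> bool) \<Rightarrow> ('v \<Rightarrow> bool)) \<Rightarrow> 'v set \<Rightarrow> 'v \<Rightarrow> 'v \<Rightarrow> bool" where
  "pos_arc g W j i \<longleftrightarrow> j \<in> W \<and> i \<in> W \<and>
     (\<exists>x \<in> confs W. g (x(j := True)) i \<and> \<not> g (x(j := False)) i)"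

definition neg_arc :: "(('v \<Rightarrow> bool) \<Rightarrow> ('v \<Rightarrow> bool)) \<Rightarrow> 'v set \<Rightarrow> 'v \<Rightarrow> 'v \<Rightarrow> bool" where
  "neg_arc g W j i \<longleftrightarrow> j \<in> W \<and> i \<in> W \<and>
     (\<exists>x \<in> confs W. \<not> g (x(j := True)) i \<and> g (x(j := False)) i)"

text \<open>G(g) itself is a cycle through all vertices of W: at most one arc per ordered
  pair, and the underlying arc relation is a directed Hamiltonian cycle on W
  (a loop when |W| = 1).\<close>
definition graph_is_full_cycle :: "(('v \<Rightarrow> bool) \<Rightarrow> ('v \<Rightarrow> bool)) \<Rightarrow> 'v set \<Rightarrow> bool" where
  "graph_is_full_cycle g W \<longleftrightarrow>
     (\<forall>j i. \<not> (pos_arc g W j i \<and> neg_arc g W j i)) \<and>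
     (\<exists>vs. distinct vs \<and> set vs = W \<and>
        (\<forall>j i. (pos_arc g W j i \<or> neg_arc g W j i) \<longleftrightarrow>
           (\<exists>k < length vs. j = vs ! k \<and> i = vs ! (Suc k mod length vs))))"

definition positive_circular :: "(('v::finite \<Rightarrow> bool) \<Rightarrow> ('v \<Rightarrow> bool)) \<Rightarrow> 'v set \<Rightarrow> bool" where
  "positive_circular g W \<longleftrightarrow> graph_is_full_cycle g W \<and>
     even (card {(j, i). neg_arc g W j i})"

definition negative_circular :: "(('v::finite \<Rightarrow> bool) \<Rightarrow> ('v \<Rightarrow> bool)) \<Rightarrow> 'v set \<Rightarrow> bool" where
  "negative_circular g W \<longleftrightarrow> graph_is_full_cycle g W \<and>
     odd (card {(j, i). neg_arc g W j i})"

end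

theory Submission
  imports Defs
begin

text \<open>If a subnetwork on \<open>I\<close> is circular, every component is a literal of its unique
  in-neighbour, so complementation on \<open>I\<close> commutes with the subnetwork and fixed points come
  in complementary pairs: there is never exactly one.

  Conversely, let \<open>I\<close> be minimal such that some subnetwork \<open>h\<close> on \<open>I\<close> lacks a unique fixed
  point. If \<open>h\<close> has two fixed points \<open>p \<noteq> q\<close>, minimality makes them complementary on \<open>I\<close>;
  non-expansiveness measured against both \<open>p\<close> and \<open>q\<close> then shows that \<open>h\<close> maps the set of
  coordinates where a configuration deviates from \<open>p\<close> by a permutation \<open>\<sigma>\<close> of \<open>I\<close>, and
  minimality forbids proper \<open>\<sigma>\<close>-invariant subsets, so \<open>\<sigma>\<close> is one cycle and \<open>h\<close> is circular.
  If \<open>h\<close> has no fixed point, negating one output \<open>i\<close> yields a non-expansive network with two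
  fixed points (extensions of the unique fixed points of the subnetworks on \<open>I - {i}\<close>) which
  is still minimal, by induction on \<open>|I|\<close>; it is circular, hence so is \<open>h\<close>.\<close>

definition unique_fixpoint ::
    "(('v \<Rightarrow> bool) \<Rightarrow> ('v \<Rightarrow> bool)) \<Rightarrow> 'v set \<Rightarrow> ('v \<Rightarrow> bool) \<Rightarrow> bool" where
  "unique_fixpoint g I z \<longleftrightarrow> (\<exists>!y. y \<in> confs I \<and> subnet g I z y = y)"

definition proper_subnets_unique :: "(('v \<Rightarrow> bool) \<Rightarrow> ('v \<Rightarrow> bool)) \<Rightarrow> 'v set \<Rightarrow> bool" where
  "proper_subnets_unique g I \<longleftrightarrow> (\<forall>J z. J \<noteq> {} \<longrightarrow> J \<subset> I \<longrightarrow> unique_fixpoint g J z)"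

definition flip_output :: "(('v \<Rightarrow> bool) \<Rightarrow> ('v \<Rightarrow> bool)) \<Rightarrow> 'v \<Rightarrow> ('v \<Rightarrow> bool) \<Rightarrow> ('v \<Rightarrow> bool)" where
  "flip_output g i = (\<lambda>x. (g x)(i := \<not> g x i))"

lemma unique_fixpoint_eq:
  "unique_fixpoint g I z \<Longrightarrow> x \<in> confs I \<Longrightarrow> subnet g I z x = x \<Longrightarrow> y \<in> confs I \<Longrightarrow>
    subnet g I z y = y \<Longrightarrow> x = y"
  unfolding unique_fixpoint_def by blast

lemma subnet_in_confs: "subnet g I z y \<in> confs I"
  by (simp add: subnet_def confs_def)

lemma confs_outside: "y \<in> confs I \<Longrightarrow> v \<notin> I \<Longrightarrow> \<not> y v"
  by (simp add: confs_def)

lemma confs_eqI: "x \<in> confs I \<Longrightarrow> y \<in> confs I \<Longrightarrow> (\<And>v. v \<in> I \<Longrightarrow> x v = y v) \<Longrightarrow> x = y"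
  by (rule ext) (metis confs_outside)

lemma fun_upd_in_confs: "x \<in> confs I \<Longrightarrow> j \<in> I \<Longrightarrow> x(j := b) \<in> confs I"
  by (auto simp: confs_def)

lemma hamming_subnet_le:
  fixes g :: "('v::finite \<Rightarrow> bool) \<Rightarrow> ('v \<Rightarrow> bool)"
  assumes "non_expansive g"
  shows "hamming (subnet g I z x) (subnet g I z y) \<le> hamming x y"
proof -
  let ?x = "\<lambda>u. if u \<in> I then x u else z u" and ?y = "\<lambda>u. if u \<in> I then y u else z u"
  have "hamming (subnet g I z x) (subnet g I z y) \<le> hamming (g ?x) (g ?y)"
    unfolding hamming_def by (rule card_mono) (auto simp: subnet_def)
  also have "\<dots> \<le> hamming ?x ?y"
    using assms by (simp add: non_expansive_def)
  also have "\<dots> \<le> hamming x y"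
    unfolding hamming_def by (rule card_mono) auto
  finally show ?thesis .
qed

lemma subnet_restrict_fixed:
  assumes "J \<subseteq> I" and fixed: "\<And>v. v \<in> J \<Longrightarrow> subnet g I z y v = y v"
    and outside: "\<And>u. u \<notin> J \<Longrightarrow> z' u = (if u \<in> I then y u else z u)"
  shows "subnet g J z' (\<lambda>v. v \<in> J \<and> y v) = (\<lambda>v. v \<in> J \<and> y v)"
proof -
  have "(\<lambda>u. if u \<in> J then u \<in> J \<and> y u else z' u) = (\<lambda>u. if u \<in> I then y u else z u)"
    using assms(1) outside by auto
  then have "subnet g J z' (\<lambda>v. v \<in> J \<and> y v) v = (v \<in> J \<and> subnet g I z y v)" for v
    using assms(1) by (auto simp: subnet_def)
  then show ?thesis
    using fixed by auto
qed

text \<open>Both configurations restrict to fixed points of one subnetwork on \<open>S\<close>, whose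
  context is their common value on \<open>I - S\<close>.\<close>

lemma local_fixpoints_agree:
  assumes min: "proper_subnets_unique g I" and S: "S \<noteq> {}" "S \<subset> I"
    and x: "x \<in> confs I" "\<And>v. v \<in> S \<Longrightarrow> subnet g I z x v = x v"
    and y: "y \<in> confs I" "\<And>v. v \<in> S \<Longrightarrow> subnet g I z y v = y v"
    and agree: "\<And>v. v \<in> I - S \<Longrightarrow> x v = y v"
  shows "x = y"
proof -
  define z' where "z' = (\<lambda>u. if u \<in> I then x u else z u)"
  have "subnet g S z' (\<lambda>v. v \<in> S \<and> x v) = (\<lambda>v. v \<in> S \<and> x v)"
    by (rule subnet_restrict_fixed[of S I g z x z']) (use S x in \<open>auto simp: z'_def\<close>)
  moreover have "subnet g S z' (\<lambda>v. v \<in> S \<and> y v) = (\<lambda>v. v \<in> S \<and> y v)"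
    by (rule subnet_restrict_fixed[of S I g z y z']) (use S y agree in \<open>auto simp: z'_def\<close>)
  moreover have "unique_fixpoint g S z'"
    using min S by (simp add: proper_subnets_unique_def)
  ultimately have "(\<lambda>v. v \<in> S \<and> x v) = (\<lambda>v. v \<in> S \<and> y v)"
    using unique_fixpoint_eq[of g S z'] by (simp add: confs_def)
  then show ?thesis
    using x(1) y(1) agree by (intro confs_eqI) (auto simp: fun_eq_iff)
qed

lemma non_expansive_flip_output:
  assumes "non_expansive g"
  shows "non_expansive (flip_output g i)"
proof -
  have "{v. flip_output g i x v \<noteq> flip_output g i y v} = {v. g x v \<noteq> g y v}" for x y
    by (auto simp: flip_output_def)
  then show ?thesis
    using assms by (simp add: non_expansive_def hamming_def)
qed

lemma subnet_flip_output:
  "k \<in> K \<Longrightarrow> subnet (flip_output g i) K z y k = (if k = i then \<not> subnet g K z y k else subnet g K z y k)"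
  by (auto simp: subnet_def flip_output_def)

lemma full_cycle_flip_output_iff:
  "graph_is_full_cycle (subnet (flip_output g i) K z) K \<longleftrightarrow> graph_is_full_cycle (subnet g K z) K"
proof -
  let ?G = "subnet g K z" and ?G' = "subnet (flip_output g i) K z"
  have pos: "pos_arc ?G' K j k = (if k = i then neg_arc ?G K j k else pos_arc ?G K j k)"
    and neg: "neg_arc ?G' K j k = (if k = i then pos_arc ?G K j k else neg_arc ?G K j k)" for j k
    by (cases "k \<in> K"; auto simp: pos_arc_def neg_arc_def subnet_flip_output)+
  have "(pos_arc ?G' K j k \<or> neg_arc ?G' K j k) = (pos_arc ?G K j k \<or> neg_arc ?G K j k)"
    "(pos_arc ?G' K j k \<and> neg_arc ?G' K j k) = (pos_arc ?G K j k \<and> neg_arc ?G K j k)" for j k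
    unfolding pos neg by auto
  then show ?thesis
    unfolding graph_is_full_cycle_def by simp
qed

section \<open>Circular subnetworks have no unique fixed point\<close>

lemma full_cycle_unique_in_arc:
  assumes "graph_is_full_cycle G I" "i \<in> I"
  obtains j where "pos_arc G I j i \<or> neg_arc G I j i"
    "\<And>j'. pos_arc G I j' i \<or> neg_arc G I j' i \<Longrightarrow> j' = j"
proof -
  obtain vs where "distinct vs" "set vs = I" and arc: "\<And>j i. pos_arc G I j i \<or> neg_arc G I j i
      \<longleftrightarrow> (\<exists>k < length vs. j = vs ! k \<and> i = vs ! (Suc k mod length vs))"
    using assms(1) unfolding graph_is_full_cycle_def by blast
  let ?n = "length vs"
  obtain m where m: "m < ?n" "i = vs ! m"
    using assms(2) \<open>set vs = I\<close> by (metis in_set_conv_nth)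
  define k where "k = (m + ?n - 1) mod ?n"
  have k_less: "k < ?n"
    using m(1) unfolding k_def by (intro mod_less_divisor) linarith
  have k_succ: "Suc k mod ?n = m"
    using m(1) unfolding k_def by (cases m) (auto simp: mod_Suc)
  show thesis
  proof
    show "pos_arc G I (vs ! k) i \<or> neg_arc G I (vs ! k) i"
      using arc k_less k_succ m by auto
  next
    fix j' assume "pos_arc G I j' i \<or> neg_arc G I j' i"
    then obtain k' where k': "k' < ?n" "j' = vs ! k'" "i = vs ! (Suc k' mod ?n)"
      using arc by blast
    moreover have "Suc k' mod ?n < ?n"
      using k'(1) by (intro mod_less_divisor) linarith
    ultimately have "Suc k' mod ?n = m"
      using nth_eq_iff_index_eq[OF \<open>distinct vs\<close>] m by metis
    then have "k' = k"
      using k_less k_succ k'(1) by (auto simp: mod_Suc split: if_splits)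
    then show "j' = vs ! k"
      using k' by simp
  qed
qed

lemma value_depends_on_single_input:
  fixes G :: "('v::finite \<Rightarrow> bool) \<Rightarrow> ('v \<Rightarrow> bool)"
  assumes no_arc: "\<And>k. k \<noteq> j \<Longrightarrow> \<not> pos_arc G I k i \<and> \<not> neg_arc G I k i" and i: "i \<in> I"
    and "x \<in> confs I" "x' \<in> confs I" "x j = x' j"
  shows "G x i = G x' i"
  using assms(3-5)
proof (induction "card {v. x v \<noteq> x' v}" arbitrary: x rule: less_induct)
  case less
  show ?case
  proof (cases "x = x'")
    case False
    then obtain k where k: "x k \<noteq> x' k" by auto
    then have "k \<in> I" "k \<noteq> j"
      using less.prems confs_outside by metis+
    let ?x = "x(k := x' k)"
    have "card {v. ?x v \<noteq> x' v} < card {v. x v \<noteq> x' v}"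
      using k by (intro psubset_card_mono) auto
    moreover have "?x \<in> confs I" "?x j = x' j"
      using less.prems \<open>k \<in> I\<close> \<open>k \<noteq> j\<close> by (simp_all add: fun_upd_in_confs)
    ultimately have "G ?x i = G x' i"
      using less.hyps less.prems(2) by blast
    moreover have "G (x(k := True)) i = G (x(k := False)) i"
      using no_arc[OF \<open>k \<noteq> j\<close>] \<open>k \<in> I\<close> i less.prems(1) by (auto simp: pos_arc_def neg_arc_def)
    then have "G (x(k := b)) i = G (x(k := c)) i" for b c
      by (cases b; cases c) simp_all
    then have "G x i = G ?x i"
      using fun_upd_triv by metis
    ultimately show ?thesis by simp
  qed simp
qed

lemma full_cycle_complement:
  fixes G :: "('v::finite \<Rightarrow> bool) \<Rightarrow> ('v \<Rightarrow> bool)"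
  assumes cyc: "graph_is_full_cycle G I" and x: "x \<in> confs I" and i: "i \<in> I"
  shows "G (\<lambda>v. v \<in> I \<and> \<not> x v) i = (\<not> G x i)"
proof -
  obtain j where arc: "pos_arc G I j i \<or> neg_arc G I j i"
    and only: "\<And>j'. pos_arc G I j' i \<or> neg_arc G I j' i \<Longrightarrow> j' = j"
    using full_cycle_unique_in_arc[OF cyc i] by blast
  have j: "j \<in> I"
    using arc by (auto simp: pos_arc_def neg_arc_def)
  let ?T = "\<lambda>v. v = j" and ?E = "\<lambda>v. False"
  have no_arc: "\<And>k. k \<noteq> j \<Longrightarrow> \<not> pos_arc G I k i \<and> \<not> neg_arc G I k i"
    using only by blast
  have literal: "G y i = (if y j then G ?T i else G ?E i)" if "y \<in> confs I" for y
  proof -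
    have "G y i = G ?T i" if "y j"
      by (rule value_depends_on_single_input[OF no_arc i]) (use \<open>y \<in> confs I\<close> that j in \<open>auto simp: confs_def\<close>)
    moreover have "G y i = G ?E i" if "\<not> y j"
      by (rule value_depends_on_single_input[OF no_arc i]) (use \<open>y \<in> confs I\<close> that in \<open>auto simp: confs_def\<close>)
    ultimately show ?thesis by simp
  qed
  have "G ?T i \<noteq> G ?E i"
  proof
    assume "G ?T i = G ?E i"
    then have "G y i = G ?E i" if "y \<in> confs I" for y
      using literal[OF that] by simp
    then show False
      using arc j by (auto simp: pos_arc_def neg_arc_def fun_upd_in_confs)
  qed
  then show ?thesis
    using literal[OF x] literal[of "\<lambda>v. v \<in> I \<and> \<not> x v"] j by (auto simp: confs_def)
qed

lemma full_cycle_not_unique_fixpoint: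
  fixes g :: "('v::finite \<Rightarrow> bool) \<Rightarrow> ('v \<Rightarrow> bool)"
  assumes cyc: "graph_is_full_cycle (subnet g I z) I" and "I \<noteq> {}"
  shows "\<not> unique_fixpoint g I z"
proof
  assume uniq: "unique_fixpoint g I z"
  then obtain y where y: "y \<in> confs I" "subnet g I z y = y"
    unfolding unique_fixpoint_def by blast
  let ?y = "\<lambda>v. v \<in> I \<and> \<not> y v"
  have "?y \<in> confs I"
    by (simp add: confs_def)
  moreover have "subnet g I z ?y = ?y"
    using full_cycle_complement[OF cyc y(1)] y(2) \<open>?y \<in> confs I\<close>
    by (intro confs_eqI[OF subnet_in_confs]) auto
  ultimately have "?y = y"
    using unique_fixpoint_eq[OF uniq _ _ y] by blast
  moreover obtain i where "i \<in> I"
    using \<open>I \<noteq> {}\<close> by blast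
  ultimately show False
    by (auto simp: fun_eq_iff)
qed

section \<open>Set maps induced by a cyclic permutation\<close>

lemma funpow_in_invariant: "\<sigma> ` I \<subseteq> I \<Longrightarrow> j \<in> I \<Longrightarrow> (\<sigma> ^^ k) j \<in> I"
  by (induction k) auto

lemma ex_subset_image_eq:
  assumes fin: "finite I" and "I \<noteq> {}" "\<sigma> ` I \<subseteq> I"
  obtains C where "C \<noteq> {}" "C \<subseteq> I" "\<sigma> ` C = C"
proof -
  obtain C where C: "C \<noteq> {} \<and> C \<subseteq> I \<and> \<sigma> ` C \<subseteq> C"
    and least: "\<And>C'. C' \<noteq> {} \<and> C' \<subseteq> I \<and> \<sigma> ` C' \<subseteq> C' \<Longrightarrow> card C \<le> card C'"
    using ex_has_least_nat[of "\<lambda>C. C \<noteq> {} \<and> C \<subseteq> I \<and> \<sigma> ` C \<subseteq> C" I card] assms by blast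
  have "finite C"
    using C fin finite_subset by blast
  have "card C \<le> card (\<sigma> ` C)"
    using C by (intro least) blast
  then have "card (\<sigma> ` C) = card C"
    using card_image_le[OF \<open>finite C\<close>] by (rule le_antisym[rotated])
  then have "\<sigma> ` C = C"
    using card_subset_eq[OF \<open>finite C\<close>] C by blast
  with C show thesis
    using that by blast
qed

lemma card_preserving_mono_set_map_image:
  fixes Phi :: "'a set \<Rightarrow> 'a set"
  assumes fin: "finite I"
    and into: "\<And>S. S \<subseteq> I \<Longrightarrow> Phi S \<subseteq> I"
    and card: "\<And>S. S \<subseteq> I \<Longrightarrow> card (Phi S) = card S"
    and mono: "\<And>S T. S \<subseteq> T \<Longrightarrow> T \<subseteq> I \<Longrightarrow> Phi S \<subseteq> Phi T"
  obtains \<sigma> where "\<And>S. S \<subseteq> I \<Longrightarrow> \<sigma> ` S \<subseteq> Phi S"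
    "\<And>S. S \<subseteq> I \<Longrightarrow> inj_on \<sigma> S \<Longrightarrow> Phi S = \<sigma> ` S"
proof -
  define \<sigma> where "\<sigma> j = the_elem (Phi {j})" for j
  have singleton: "Phi {j} = {\<sigma> j}" if "j \<in> I" for j
  proof -
    have "card (Phi {j}) = 1"
      using card[of "{j}"] that by simp
    then obtain m where "Phi {j} = {m}"
      by (rule card_1_singletonE)
    then show ?thesis
      by (simp add: \<sigma>_def)
  qed
  have image_sub: "\<sigma> ` S \<subseteq> Phi S" if "S \<subseteq> I" for S
  proof
    fix x assume "x \<in> \<sigma> ` S"
    then obtain s where "s \<in> S" "x = \<sigma> s"
      by blast
    then have "x \<in> Phi {s}"
      using singleton[of s] that by auto
    moreover have "Phi {s} \<subseteq> Phi S"
      using mono[of "{s}" S] \<open>s \<in> S\<close> that by simp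
    ultimately show "x \<in> Phi S"
      by blast
  qed
  have image_eq: "Phi S = \<sigma> ` S" if "S \<subseteq> I" "inj_on \<sigma> S" for S
  proof -
    have "finite (Phi S)"
      using into[OF that(1)] fin by (rule finite_subset)
    moreover have "card (\<sigma> ` S) = card (Phi S)"
      using card[OF that(1)] card_image[OF that(2)] by simp
    ultimately show ?thesis
      using card_subset_eq image_sub[OF that(1)] by metis
  qed
  show thesis
    by (rule that[OF image_sub image_eq])
qed

lemma set_map_induced_by_cyclic_perm:
  fixes Phi :: "'a set \<Rightarrow> 'a set"
  assumes fin: "finite I" and ne: "I \<noteq> {}"
    and into: "\<And>S. S \<subseteq> I \<Longrightarrow> Phi S \<subseteq> I"
    and card: "\<And>S. S \<subseteq> I \<Longrightarrow> card (Phi S) = card S"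
    and mono: "\<And>S T. S \<subseteq> T \<Longrightarrow> T \<subseteq> I \<Longrightarrow> Phi S \<subseteq> Phi T"
    and no_invariant: "\<And>S. S \<noteq> {} \<Longrightarrow> S \<subset> I \<Longrightarrow> Phi S \<noteq> S"
  obtains \<sigma> where "inj_on \<sigma> I" "\<sigma> ` I = I" "\<And>S. S \<subseteq> I \<Longrightarrow> Phi S = \<sigma> ` S"
    "\<And>S. S \<noteq> {} \<Longrightarrow> S \<subseteq> I \<Longrightarrow> \<sigma> ` S \<subseteq> S \<Longrightarrow> S = I"
proof -
  obtain \<sigma> where image_sub: "\<And>S. S \<subseteq> I \<Longrightarrow> \<sigma> ` S \<subseteq> Phi S"
    and image_eq: "\<And>S. S \<subseteq> I \<Longrightarrow> inj_on \<sigma> S \<Longrightarrow> Phi S = \<sigma> ` S"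
    using card_preserving_mono_set_map_image[OF fin into card mono] by blast
  have "\<sigma> ` I \<subseteq> I"
    using image_sub[of I] into[of I] by simp
  then obtain C where C: "C \<noteq> {}" "C \<subseteq> I" "\<sigma> ` C = C"
    by (rule ex_subset_image_eq[OF fin ne])
  then have "inj_on \<sigma> C"
    using finite_subset[OF C(2) fin] by (intro eq_card_imp_inj_on) simp_all
  then have "Phi C = C"
    using image_eq[OF C(2)] C(3) by simp
  then have "C = I"
    using no_invariant[OF C(1)] C(2) by blast
  with C \<open>inj_on \<sigma> C\<close> have inj: "inj_on \<sigma> I" and onto: "\<sigma> ` I = I"
    by simp_all
  show thesis
  proof (rule that[OF inj onto])
    show "Phi S = \<sigma> ` S" if "S \<subseteq> I" for S
      using image_eq that inj_on_subset[OF inj] by blast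
    show "S = I" if S: "S \<noteq> {}" "S \<subseteq> I" "\<sigma> ` S \<subseteq> S" for S
    proof -
      have "card (\<sigma> ` S) = card S"
        using card_image inj_on_subset[OF inj S(2)] by blast
      then have "\<sigma> ` S = S"
        using card_subset_eq[OF finite_subset[OF S(2) fin] S(3)] by simp
      then have "Phi S = S"
        using image_eq S(2) inj_on_subset[OF inj S(2)] by simp
      then show ?thesis
        using no_invariant[OF S(1)] S(2) by blast
    qed
  qed
qed

lemma orbit_inj_on:
  assumes into: "\<sigma> ` I \<subseteq> I" and j0: "j0 \<in> I"
    and closed: "\<And>S. S \<noteq> {} \<Longrightarrow> S \<subseteq> I \<Longrightarrow> \<sigma> ` S \<subseteq> S \<Longrightarrow> S = I"
  shows "inj_on (\<lambda>k. (\<sigma> ^^ k) j0) {..<card I}"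
proof -
  have orbit_in: "(\<sigma> ^^ k) j0 \<in> I" for k
    using into j0 by (rule funpow_in_invariant)
  have neq: "(\<sigma> ^^ a) j0 \<noteq> (\<sigma> ^^ b) j0" if ab: "a < b" "b < card I" for a b
  proof
    assume eq: "(\<sigma> ^^ a) j0 = (\<sigma> ^^ b) j0"
    define S where "S = (\<lambda>k. (\<sigma> ^^ k) j0) ` {..<b}"
    have "\<sigma> x \<in> S" if "x \<in> S" for x
    proof -
      obtain k where k: "k < b" "x = (\<sigma> ^^ k) j0"
        using \<open>x \<in> S\<close> by (auto simp: S_def)
      show ?thesis
      proof (cases "Suc k = b")
        case True
        then have "\<sigma> x = (\<sigma> ^^ a) j0"
          using k eq True[symmetric] by simp
        then show ?thesis
          using ab(1) by (auto simp: S_def)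
      next
        case False
        then show ?thesis
          using k by (auto simp: S_def intro!: image_eqI[where x = "Suc k"])
      qed
    qed
    moreover have "S \<noteq> {}" "S \<subseteq> I"
      using ab orbit_in by (auto simp: S_def)
    ultimately have "S = I"
      using closed by blast
    moreover have "card S \<le> b"
      using card_image_le[of "{..<b}" "\<lambda>k. (\<sigma> ^^ k) j0"] by (simp add: S_def)
    ultimately show False
      using ab by simp
  qed
  show ?thesis
  proof (rule inj_onI)
    fix a b assume "a \<in> {..<card I}" "b \<in> {..<card I}" "(\<sigma> ^^ a) j0 = (\<sigma> ^^ b) j0"
    then show "a = b"
      using neq[of a b] neq[of b a] by (cases a b rule: linorder_cases) auto
  qed
qed

lemma orbit_returns:
  assumes fin: "finite I" and inj: "inj_on \<sigma> I" and into: "\<sigma> ` I \<subseteq> I" and j0: "j0 \<in> I"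
    and closed: "\<And>S. S \<noteq> {} \<Longrightarrow> S \<subseteq> I \<Longrightarrow> \<sigma> ` S \<subseteq> S \<Longrightarrow> S = I"
  shows "(\<sigma> ^^ card I) j0 = j0"
proof -
  let ?n = "card I" and ?orbit = "\<lambda>k. (\<sigma> ^^ k) j0"
  have orbit_in: "?orbit k \<in> I" for k
    using into j0 by (rule funpow_in_invariant)
  have inj_orbit: "inj_on ?orbit {..<?n}"
    using orbit_inj_on[OF into j0 closed] by simp
  have "?orbit ` {..<?n} \<subseteq> I"
    using orbit_in by blast
  moreover have "card (?orbit ` {..<?n}) = card I"
    using card_image[OF inj_orbit] by simp
  ultimately have "?orbit ` {..<?n} = I"
    by (rule card_subset_eq[OF fin])
  then obtain a where a: "a < ?n" "?orbit ?n = ?orbit a"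
    using orbit_in[of ?n] by auto
  have "?n > 0"
    using j0 fin card_gt_0_iff by blast
  then obtain m where m: "?n = Suc m"
    using gr0_implies_Suc by blast
  have "a = 0"
  proof (rule ccontr)
    assume "a \<noteq> 0"
    then obtain a' where a': "a = Suc a'"
      using not0_implies_Suc by blast
    have "\<sigma> (?orbit m) = \<sigma> (?orbit a')"
      using a m a' by simp
    then have "?orbit m = ?orbit a'"
      using inj_onD[OF inj _ orbit_in orbit_in] by simp
    then have "m = a'"
      using inj_onD[OF inj_orbit] a a' m by simp
    then show False
      using a a' m by simp
  qed
  then show ?thesis
    using a by simp
qed

lemma cyclic_permutation_enumeration:
  assumes fin: "finite I" and ne: "I \<noteq> {}" and inj: "inj_on \<sigma> I" and into: "\<sigma> ` I \<subseteq> I"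
    and closed: "\<And>S. S \<noteq> {} \<Longrightarrow> S \<subseteq> I \<Longrightarrow> \<sigma> ` S \<subseteq> S \<Longrightarrow> S = I"
  obtains vs where "distinct vs" "set vs = I"
    "\<And>j i. j \<in> I \<and> i = \<sigma> j \<longleftrightarrow> (\<exists>k < length vs. j = vs ! k \<and> i = vs ! (Suc k mod length vs))"
proof -
  obtain j0 where j0: "j0 \<in> I"
    using ne by blast
  let ?n = "card I"
  define vs where "vs = map (\<lambda>k. (\<sigma> ^^ k) j0) [0..<?n]"
  have orbit_in: "(\<sigma> ^^ k) j0 \<in> I" for k
    using into j0 by (rule funpow_in_invariant)
  have len: "length vs = ?n"
    by (simp add: vs_def)
  have nth: "vs ! k = (\<sigma> ^^ k) j0" if "k < ?n" for k
    using that by (simp add: vs_def)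
  have "distinct vs"
    using orbit_inj_on[OF into j0 closed] by (simp add: vs_def distinct_map atLeast0LessThan)
  have "set vs \<subseteq> I"
    using orbit_in by (auto simp: vs_def)
  moreover have "card (set vs) = card I"
    using distinct_card[OF \<open>distinct vs\<close>] len by simp
  ultimately have "set vs = I"
    by (rule card_subset_eq[OF fin])
  have succ: "vs ! (Suc k mod ?n) = \<sigma> (vs ! k)" if "k < ?n" for k
  proof (cases "Suc k < ?n")
    case False
    then have "Suc k = ?n"
      using that by simp
    then have "vs ! (Suc k mod ?n) = (\<sigma> ^^ Suc k) j0"
      using nth[of 0] orbit_returns[OF fin inj into j0 closed] by simp
    then show ?thesis
      using nth[OF that] by simp
  qed (simp add: nth that)
  have "j \<in> I \<and> i = \<sigma> j \<longleftrightarrow> (\<exists>k < length vs. j = vs ! k \<and> i = vs ! (Suc k mod length vs))"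
    for j i
  proof
    assume "j \<in> I \<and> i = \<sigma> j"
    moreover obtain k where "k < length vs" "j = vs ! k"
      using \<open>j \<in> I \<and> i = \<sigma> j\<close> \<open>set vs = I\<close> by (auto simp: in_set_conv_nth)
    ultimately show "\<exists>k < length vs. j = vs ! k \<and> i = vs ! (Suc k mod length vs)"
      using succ len by auto
  next
    assume "\<exists>k < length vs. j = vs ! k \<and> i = vs ! (Suc k mod length vs)"
    then show "j \<in> I \<and> i = \<sigma> j"
      using succ len \<open>set vs = I\<close> nth_mem by auto
  qed
  with \<open>distinct vs\<close> \<open>set vs = I\<close> show thesis
    using that by blast
qed

lemma literal_cycle_full_cycle:
  fixes F :: "('v \<Rightarrow> bool) \<Rightarrow> ('v \<Rightarrow> bool)"
  assumes fin: "finite I" and ne: "I \<noteq> {}" and inj: "inj_on \<sigma> I" and onto: "\<sigma> ` I = I"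
    and closed: "\<And>S. S \<noteq> {} \<Longrightarrow> S \<subseteq> I \<Longrightarrow> \<sigma> ` S \<subseteq> S \<Longrightarrow> S = I"
    and literal: "\<And>y j. y \<in> confs I \<Longrightarrow> j \<in> I \<Longrightarrow>
      F y (\<sigma> j) = (if y j = p j then p (\<sigma> j) else \<not> p (\<sigma> j))"
  shows "graph_is_full_cycle F I"
proof -
  have arcs: "pos_arc F I j (\<sigma> k) \<longleftrightarrow> j = k \<and> p j = p (\<sigma> k)"
    "neg_arc F I j (\<sigma> k) \<longleftrightarrow> j = k \<and> p j \<noteq> p (\<sigma> k)" if "j \<in> I" "k \<in> I" for j k
  proof -
    have upd: "F (x(j := b)) (\<sigma> k) = (if (x(j := b)) k = p k then p (\<sigma> k) else \<not> p (\<sigma> k))"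
      if "x \<in> confs I" for x b
      using literal[OF fun_upd_in_confs[OF that \<open>j \<in> I\<close>] \<open>k \<in> I\<close>] .
    have "(\<lambda>_. False) \<in> confs I"
      by (simp add: confs_def)
    then show "pos_arc F I j (\<sigma> k) \<longleftrightarrow> j = k \<and> p j = p (\<sigma> k)"
      "neg_arc F I j (\<sigma> k) \<longleftrightarrow> j = k \<and> p j \<noteq> p (\<sigma> k)"
      using that onto by (auto simp: pos_arc_def neg_arc_def upd)
  qed
  have arc_cases: "(pos_arc F I j i \<or> neg_arc F I j i \<longleftrightarrow> j \<in> I \<and> i = \<sigma> j) \<and>
      \<not> (pos_arc F I j i \<and> neg_arc F I j i)" for j i
  proof -
    consider k where "j \<in> I" "k \<in> I" "i = \<sigma> k" | "j \<notin> I \<or> i \<notin> I"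
      using onto by blast
    then show ?thesis
      by cases (use arcs onto inj in \<open>auto simp: pos_arc_def neg_arc_def dest: inj_onD\<close>)
  qed
  then have arc_iff: "pos_arc F I j i \<or> neg_arc F I j i \<longleftrightarrow> j \<in> I \<and> i = \<sigma> j"
    and not_both: "\<not> (pos_arc F I j i \<and> neg_arc F I j i)" for j i
    by blast+
  obtain vs where "distinct vs" "set vs = I"
    "\<And>j i. j \<in> I \<and> i = \<sigma> j \<longleftrightarrow> (\<exists>k < length vs. j = vs ! k \<and> i = vs ! (Suc k mod length vs))"
    using cyclic_permutation_enumeration[OF fin ne inj _ closed] onto by blast
  then show ?thesis
    unfolding graph_is_full_cycle_def arc_iff using not_both by blast
qed

section \<open>Non-expansive maps with two antipodal fixed points\<close>

definition flip_on :: "'v set \<Rightarrow> ('v \<Rightarrow> bool) \<Rightarrow> ('v \<Rightarrow> bool)" where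
  "flip_on S p = (\<lambda>v. if v \<in> S then \<not> p v else p v)"

lemma deviation_flip_on: "{v. flip_on S p v \<noteq> p v} = S"
  by (auto simp: flip_on_def)

lemma flip_on_deviation: "flip_on {v. y v \<noteq> p v} p = y"
  by (auto simp: flip_on_def)

lemma flip_on_in_confs: "S \<subseteq> I \<Longrightarrow> p \<in> confs I \<Longrightarrow> flip_on S p \<in> confs I"
  by (auto simp: flip_on_def confs_def)

locale antipodal_contraction =
  fixes F :: "('v::finite \<Rightarrow> bool) \<Rightarrow> ('v \<Rightarrow> bool)" and I :: "'v set" and p q :: "'v \<Rightarrow> bool"
  assumes contraction: "hamming (F x) (F y) \<le> hamming x y"
    and maps_to_confs: "F y \<in> confs I"
    and p: "p \<in> confs I" "F p = p"
    and q: "q \<in> confs I" "F q = q"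
    and antipodal: "v \<in> I \<Longrightarrow> q v = (\<not> p v)"
begin

lemma deviation_subset: "y \<in> confs I \<Longrightarrow> {v. y v \<noteq> p v} \<subseteq> I"
  using p(1) by (auto simp: confs_def)

lemma hamming_antipode: "y \<in> confs I \<Longrightarrow> hamming y q = card I - hamming y p"
proof -
  assume y: "y \<in> confs I"
  have "{v. y v \<noteq> q v} = I - {v. y v \<noteq> p v}"
    using y p(1) q(1) antipodal by (auto simp: confs_def)
  then show ?thesis
    using deviation_subset[OF y] by (simp add: hamming_def card_Diff_subset)
qed

lemma hamming_image_eq: "y \<in> confs I \<Longrightarrow> hamming (F y) p = hamming y p"
proof -
  assume y: "y \<in> confs I"
  have "hamming (F y) p \<le> hamming y p"
    using contraction[of y p] p(2) by simp
  moreover have "hamming (F y) q \<le> hamming y q"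
    using contraction[of y q] q(2) by simp
  moreover have "hamming y p \<le> card I" "hamming (F y) p \<le> card I"
    unfolding hamming_def using deviation_subset[OF y] deviation_subset[OF maps_to_confs]
    by (simp_all add: card_mono)
  ultimately show ?thesis
    using hamming_antipode[OF y] hamming_antipode[OF maps_to_confs[of y]] by linarith
qed

text \<open>Distances to \<open>p\<close> are preserved, so a pair of nested deviation sets, whose distance is
  the difference of their sizes, cannot be mapped to a non-nested pair.\<close>

lemma deviation_image_mono:
  assumes y: "y \<in> confs I" "y' \<in> confs I" and sub: "{v. y v \<noteq> p v} \<subseteq> {v. y' v \<noteq> p v}"
  shows "{v. F y v \<noteq> p v} \<subseteq> {v. F y' v \<noteq> p v}"
proof -
  let ?A = "{v. F y v \<noteq> p v}" and ?B = "{v. F y' v \<noteq> p v}"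
  have "{v. y v \<noteq> y' v} = {v. y' v \<noteq> p v} - {v. y v \<noteq> p v}"
    using sub by auto
  then have "hamming y y' = hamming y' p - hamming y p"
    using sub by (simp add: hamming_def card_Diff_subset)
  also have "\<dots> = card ?B - card ?A"
    using hamming_image_eq[OF y(1)] hamming_image_eq[OF y(2)] by (simp add: hamming_def)
  finally have before: "hamming y y' = card ?B - card ?A" .
  have "{v. F y v \<noteq> F y' v} = (?A - ?B) \<union> (?B - ?A)"
    by blast
  then have after: "hamming (F y) (F y') = card (?A - ?B) + card (?B - ?A)"
    unfolding hamming_def by (simp add: card_Un_disjoint Diff_Int_distrib2)
  have "card (?A - ?B) + card (?B - ?A) \<le> card ?B - card ?A"
    using contraction[of y y'] unfolding before after .
  moreover have "card ?A = card (?A \<inter> ?B) + card (?A - ?B)"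
    by (rule card_Int_Diff) simp
  moreover have "card ?B = card (?A \<inter> ?B) + card (?B - ?A)"
    using card_Int_Diff[of ?B ?A] by (simp add: Int_commute)
  ultimately have "card (?A - ?B) = 0"
    by linarith
  then show ?thesis
    by simp
qed

lemma full_cycle_if_no_invariant_deviation:
  assumes "I \<noteq> {}"
    and no_invariant: "\<And>S. S \<noteq> {} \<Longrightarrow> S \<subset> I \<Longrightarrow> {v. F (flip_on S p) v \<noteq> p v} \<noteq> S"
  shows "graph_is_full_cycle F I"
proof -
  define Phi where "Phi S = {v. F (flip_on S p) v \<noteq> p v}" for S
  have flip_in: "flip_on S p \<in> confs I" if "S \<subseteq> I" for S
    using that p(1) by (rule flip_on_in_confs)
  have Phi_into: "Phi S \<subseteq> I" for S
    unfolding Phi_def by (rule deviation_subset[OF maps_to_confs])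
  have Phi_card: "card (Phi S) = card S" if "S \<subseteq> I" for S
    using hamming_image_eq[OF flip_in[OF that]] unfolding hamming_def deviation_flip_on
    by (simp only: Phi_def)
  have Phi_mono: "Phi S \<subseteq> Phi T" if "S \<subseteq> T" "T \<subseteq> I" for S T
  proof -
    have "{v. flip_on S p v \<noteq> p v} \<subseteq> {v. flip_on T p v \<noteq> p v}"
      unfolding deviation_flip_on by (fact that(1))
    then show ?thesis
      unfolding Phi_def
      by (rule deviation_image_mono[OF flip_in[OF subset_trans[OF that]] flip_in[OF that(2)]])
  qed
  obtain \<sigma> where inj: "inj_on \<sigma> I" and onto: "\<sigma> ` I = I" and image: "\<And>S. S \<subseteq> I \<Longrightarrow> Phi S = \<sigma> ` S"
    and closed: "\<And>S. S \<noteq> {} \<Longrightarrow> S \<subseteq> I \<Longrightarrow> \<sigma> ` S \<subseteq> S \<Longrightarrow> S = I"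
    by (rule set_map_induced_by_cyclic_perm[OF _ \<open>I \<noteq> {}\<close> _ Phi_card Phi_mono no_invariant[folded Phi_def]])
      (use Phi_into in simp_all)
  have literal: "F y (\<sigma> j) = (if y j = p j then p (\<sigma> j) else \<not> p (\<sigma> j))"
    if "y \<in> confs I" "j \<in> I" for y j
  proof -
    have "{v. F y v \<noteq> p v} = \<sigma> ` {v. y v \<noteq> p v}"
      using image[OF deviation_subset[OF that(1)]] unfolding Phi_def flip_on_deviation .
    moreover have "\<sigma> j \<in> \<sigma> ` {v. y v \<noteq> p v} \<longleftrightarrow> y j \<noteq> p j"
      using inj_on_image_mem_iff[OF inj that(2) deviation_subset[OF that(1)]] by simp
    ultimately show ?thesis
      by auto
  qed
  show ?thesis
    by (rule literal_cycle_full_cycle[OF _ \<open>I \<noteq> {}\<close> inj onto closed literal]) simp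
qed

end

section \<open>Minimal subnetworks with two fixed points are circular\<close>

lemma two_fixpoints_complementary:
  assumes min: "proper_subnets_unique g I"
    and p: "p \<in> confs I" "subnet g I z p = p" and q: "q \<in> confs I" "subnet g I z q = q"
    and "p \<noteq> q" and k: "k \<in> I"
  shows "q k = (\<not> p k)"
proof (rule ccontr)
  assume "q k \<noteq> (\<not> p k)"
  then have pk: "q k = p k"
    by auto
  have "p = q"
  proof (cases "I - {k} = {}")
    case True
    then show ?thesis
      using pk by (intro confs_eqI[OF p(1) q(1)]) auto
  next
    case False
    have fixed: "subnet g I z p v = p v" "subnet g I z q v = q v" for v
      using p(2) q(2) by simp_all
    show ?thesis
      by (rule local_fixpoints_agree[OF min False _ p(1) fixed(1) q(1) fixed(2)]) (use k pk in auto)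
  qed
  with \<open>p \<noteq> q\<close> show False ..
qed

lemma two_fixpoints_full_cycle:
  fixes g :: "('v::finite \<Rightarrow> bool) \<Rightarrow> ('v \<Rightarrow> bool)"
  assumes ne: "non_expansive g" and "I \<noteq> {}" and min: "proper_subnets_unique g I"
    and p: "p \<in> confs I" "subnet g I z p = p" and q: "q \<in> confs I" "subnet g I z q = q"
    and "p \<noteq> q"
  shows "graph_is_full_cycle (subnet g I z) I"
proof -
  let ?F = "subnet g I z"
  interpret antipodal_contraction ?F I p q
    using hamming_subnet_le[OF ne] subnet_in_confs p q two_fixpoints_complementary[OF min p q \<open>p \<noteq> q\<close>]
    by unfold_locales auto
  have "{v. ?F (flip_on S p) v \<noteq> p v} \<noteq> S" if S: "S \<noteq> {}" "S \<subset> I" for S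
  proof
    assume invariant: "{v. ?F (flip_on S p) v \<noteq> p v} = S"
    have fixed_flip: "?F (flip_on S p) v = flip_on S p v" if "v \<in> S" for v
    proof -
      have "v \<in> {v. ?F (flip_on S p) v \<noteq> p v}"
        using invariant that by simp
      then show ?thesis
        using that by (simp add: flip_on_def)
    qed
    have fixed_p: "?F p v = p v" for v
      by (simp add: p(2))
    have "flip_on S p = p"
      by (rule local_fixpoints_agree[OF min S flip_on_in_confs fixed_flip p(1) fixed_p])
        (use S(2) p(1) in \<open>auto simp: flip_on_def\<close>)
    moreover obtain v where "v \<in> S"
      using S(1) by blast
    ultimately show False
      by (metis flip_on_def)
  qed
  then show ?thesis
    by (rule full_cycle_if_no_invariant_deviation[OF \<open>I \<noteq> {}\<close>])
qed

section \<open>Minimal subnetworks without fixed point are circular\<close>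

lemma fixpoint_off_component:
  assumes min: "proper_subnets_unique g I" and i: "i \<in> I"
  obtains y where "y \<in> confs I" "y i = a" "\<And>v. v \<in> I - {i} \<Longrightarrow> subnet g I z y v = y v"
proof (cases "I - {i} = {}")
  case True
  show thesis
    by (rule that[of "\<lambda>v. v = i \<and> a"]) (use i True in \<open>auto simp: confs_def\<close>)
next
  case False
  define z' where "z' = z(i := a)"
  have "I - {i} \<subset> I"
    using i by blast
  with min False have "unique_fixpoint g (I - {i}) z'"
    by (simp add: proper_subnets_unique_def)
  then obtain w where w: "w \<in> confs (I - {i})" "subnet g (I - {i}) z' w = w"
    unfolding unique_fixpoint_def by blast
  define y where "y = w(i := a)"
  have context_eq: "(\<lambda>u. if u \<in> I then y u else z u) = (\<lambda>u. if u \<in> I - {i} then w u else z' u)"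
    using i by (auto simp: y_def z'_def)
  have "subnet g I z y v = y v" if "v \<in> I - {i}" for v
  proof -
    have "subnet g I z y v = subnet g (I - {i}) z' w v"
      using that by (simp add: subnet_def context_eq)
    also have "\<dots> = w v"
      using w(2) by simp
    finally show ?thesis
      using that by (simp add: y_def)
  qed
  moreover have "y \<in> confs I"
    using w(1) i by (auto simp: y_def confs_def)
  ultimately show thesis
    by (intro that[of y]) (simp_all add: y_def)
qed

lemma flip_output_fixpoint:
  assumes min: "proper_subnets_unique g I" and i: "i \<in> I"
    and no_fixpoint: "\<And>y. y \<in> confs I \<Longrightarrow> subnet g I z y \<noteq> y"
  obtains y where "y \<in> confs I" "y i = a" "subnet (flip_output g i) I z y = y"
proof -
  obtain y where y: "y \<in> confs I" "y i = a"
    and off: "\<And>v. v \<in> I - {i} \<Longrightarrow> subnet g I z y v = y v"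
    using fixpoint_off_component[OF min i] by blast
  have "subnet g I z y i \<noteq> y i"
  proof
    assume "subnet g I z y i = y i"
    then have "subnet g I z y = y"
      using off by (intro confs_eqI[OF subnet_in_confs y(1)]) (metis Diff_iff singletonD)
    with no_fixpoint y(1) show False
      by blast
  qed
  then have "subnet (flip_output g i) I z y = y"
    using off by (intro confs_eqI[OF subnet_in_confs y(1)]) (auto simp: subnet_flip_output)
  with y show thesis
    by (rule that)
qed

lemma exists_minimal_nonunique:
  fixes g :: "('v::finite \<Rightarrow> bool) \<Rightarrow> ('v \<Rightarrow> bool)"
  assumes "J \<noteq> {}" "\<not> unique_fixpoint g J z"
  shows "\<exists>K z'. K \<noteq> {} \<and> K \<subseteq> J \<and> \<not> unique_fixpoint g K z' \<and> proper_subnets_unique g K"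
  using assms
proof (induction "card J" arbitrary: J z rule: less_induct)
  case less
  show ?case
  proof (cases "proper_subnets_unique g J")
    case True
    with less.prems show ?thesis
      by blast
  next
    case False
    then obtain J' z' where J': "J' \<noteq> {}" "J' \<subset> J" "\<not> unique_fixpoint g J' z'"
      unfolding proper_subnets_unique_def by blast
    then have "card J' < card J"
      by (simp add: psubset_card_mono)
    then obtain K z'' where "K \<noteq> {}" "K \<subseteq> J'" "\<not> unique_fixpoint g K z''" "proper_subnets_unique g K"
      using less.hyps[OF _ J'(1,3)] by blast
    then show ?thesis
      using J'(2) by (intro exI[of _ K] exI[of _ z'']) auto
  qed
qed

text \<open>Negating the output \<open>i\<close> does not change the underlying interaction graph of any
  subnetwork, so a smaller non-unique subnetwork of the negated network would, by induction,
  be circular for the original network too, contradicting minimality.\<close>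

lemma flip_output_proper_subnets_unique:
  fixes g :: "('v::finite \<Rightarrow> bool) \<Rightarrow> ('v \<Rightarrow> bool)"
  assumes min: "proper_subnets_unique g I"
    and smaller_circular: "\<And>K z. K \<noteq> {} \<Longrightarrow> K \<subset> I \<Longrightarrow> \<not> unique_fixpoint (flip_output g i) K z \<Longrightarrow>
      proper_subnets_unique (flip_output g i) K \<Longrightarrow> graph_is_full_cycle (subnet (flip_output g i) K z) K"
  shows "proper_subnets_unique (flip_output g i) I"
  unfolding proper_subnets_unique_def
proof (intro allI impI)
  fix J z assume J: "J \<noteq> {}" "J \<subset> I"
  show "unique_fixpoint (flip_output g i) J z"
  proof (rule ccontr)
    assume "\<not> unique_fixpoint (flip_output g i) J z"
    then obtain K zK where K: "K \<noteq> {}" "K \<subseteq> J" "\<not> unique_fixpoint (flip_output g i) K zK"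
      "proper_subnets_unique (flip_output g i) K"
      using exists_minimal_nonunique[OF J(1)] by meson
    have "K \<subset> I"
      using K(2) J(2) by (rule subset_psubset_trans)
    then have "graph_is_full_cycle (subnet (flip_output g i) K zK) K"
      using smaller_circular K(1,3,4) by blast
    then have "\<not> unique_fixpoint g K zK"
      unfolding full_cycle_flip_output_iff using K(1) by (rule full_cycle_not_unique_fixpoint)
    with min K(1) \<open>K \<subset> I\<close> show False
      unfolding proper_subnets_unique_def by blast
  qed
qed

lemma minimal_nonunique_full_cycle:
  fixes g :: "('v::finite \<Rightarrow> bool) \<Rightarrow> ('v \<Rightarrow> bool)"
  assumes "non_expansive g" "I \<noteq> {}" "\<not> unique_fixpoint g I z" "proper_subnets_unique g I"
  shows "graph_is_full_cycle (subnet g I z) I"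
  using assms
proof (induction "card I" arbitrary: I g z rule: less_induct)
  case less
  show ?case
  proof (cases "\<exists>p. p \<in> confs I \<and> subnet g I z p = p")
    case True
    then obtain p where p: "p \<in> confs I" "subnet g I z p = p"
      by blast
    moreover obtain q where "q \<in> confs I" "subnet g I z q = q" "p \<noteq> q"
      using less.prems(3) p unfolding unique_fixpoint_def by blast
    ultimately show ?thesis
      using two_fixpoints_full_cycle less.prems(1,2,4) by blast
  next
    case False
    obtain i where i: "i \<in> I"
      using less.prems(2) by blast
    let ?g = "flip_output g i"
    have ne: "non_expansive ?g"
      using non_expansive_flip_output[OF less.prems(1)] .
    have minimal: "proper_subnets_unique ?g I"
    proof (rule flip_output_proper_subnets_unique[OF less.prems(4)])
      fix K zK assume K: "K \<noteq> {}" "K \<subset> I" "\<not> unique_fixpoint ?g K zK" "proper_subnets_unique ?g K"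
      have "card K < card I"
        using K(2) by (simp add: psubset_card_mono)
      then show "graph_is_full_cycle (subnet ?g K zK) K"
        by (rule less.hyps[OF _ ne K(1,3,4)])
    qed
    have no_fixpoint: "\<And>y. y \<in> confs I \<Longrightarrow> subnet g I z y \<noteq> y"
      using False by blast
    obtain y0 where y0: "y0 \<in> confs I" "y0 i = False" "subnet ?g I z y0 = y0"
      by (rule flip_output_fixpoint[OF less.prems(4) i no_fixpoint])
    obtain y1 where y1: "y1 \<in> confs I" "y1 i = True" "subnet ?g I z y1 = y1"
      by (rule flip_output_fixpoint[OF less.prems(4) i no_fixpoint])
    have "y0 \<noteq> y1"
      using y0(2) y1(2) by auto
    then have "graph_is_full_cycle (subnet ?g I z) I"
      by (rule two_fixpoints_full_cycle[OF ne less.prems(2) minimal y0(1,3) y1(1,3)])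
    then show ?thesis
      by (simp add: full_cycle_flip_output_iff)
  qed
qed

lemma circular_iff_full_cycle:
  "positive_circular G W \<or> negative_circular G W \<longleftrightarrow> graph_is_full_cycle G W"
  by (auto simp: positive_circular_def negative_circular_def)

theorem corollary6:
  fixes f :: "('v::finite \<Rightarrow> bool) \<Rightarrow> ('v \<Rightarrow> bool)"
  assumes "non_expansive f"
  shows "(\<forall>I z. I \<noteq> {} \<longrightarrow> (\<exists>!y. y \<in> confs I \<and> subnet f I z y = y))
     \<longleftrightarrow> \<not> (\<exists>I z. I \<noteq> {} \<and>
              (positive_circular (subnet f I z) I \<or> negative_circular (subnet f I z) I))"
proof -
  have "(\<forall>I z. I \<noteq> {} \<longrightarrow> unique_fixpoint f I z)
      \<longleftrightarrow> \<not> (\<exists>I z. I \<noteq> {} \<and> graph_is_full_cycle (subnet f I z) I)"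
  proof
    assume "\<forall>I z. I \<noteq> {} \<longrightarrow> unique_fixpoint f I z"
    then show "\<not> (\<exists>I z. I \<noteq> {} \<and> graph_is_full_cycle (subnet f I z) I)"
      using full_cycle_not_unique_fixpoint[of f] by blast
  next
    assume no_cycle: "\<not> (\<exists>I z. I \<noteq> {} \<and> graph_is_full_cycle (subnet f I z) I)"
    show "\<forall>I z. I \<noteq> {} \<longrightarrow> unique_fixpoint f I z"
    proof (intro allI impI, rule ccontr)
      fix I z assume "I \<noteq> {}" "\<not> unique_fixpoint f I z"
      then obtain K z' where K: "K \<noteq> {}" "\<not> unique_fixpoint f K z'" "proper_subnets_unique f K"
        using exists_minimal_nonunique[of I f z] by blast
      then have "graph_is_full_cycle (subnet f K z') K"
        by (rule minimal_nonunique_full_cycle[OF assms])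
      with no_cycle K(1) show False
        by blast
    qed
  qed
  then show ?thesis
    by (simp only: unique_fixpoint_def circular_iff_full_cycle)
qed

end
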